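(* Let $X,\Phi,k_z$ be as in the context. Let $A\subset\mathbb R^d$ be bounded Borel and $h:\mathcal K\to[0,\infty)$ Borel with $\int_{\mathcal K}h\,d\psi[X]<\infty$ a.s. For $\varepsilon>0$ let $I^\varepsilon\subset\Phi\cap\varepsilon^{-1}A$ be random sets with $\varepsilon^d\#I^\varepsilon\to0$ a.s. as $\varepsilon\searrow0$. Then $\varepsilon^d\sum_{z\in I^\varepsilon}h(k_z)\to0$ a.s.
   Context: All random objects are defined on a fixed probability space $(\Omega,\mathcal F,\mathbb P)$; $|\cdot|$ is Lebesgue measure on $\mathbb R^d$. Let $\mathcal K$ be a complete separable metric space. A set $Y\subset\mathbb R^d\times\mathcal K$ is admissible if it is the graph of a $\mathcal K$-valued function whose domain $\mathrm{dom}\,Y$ is locally finite; an MPP with marks in $\mathcal K$ is a random admissible set (measurable w.r.t. the $\sigma$-algebra generated by $Y\mapsto\#(Y\cap A)$, $A$ Borel). $X$ is stationary if $S_\tau X:=\{(y-\tau,k):(y,k)\in X\}$ has the same law as $X$ for every $\tau\in\mathbb R^d$; $\mathcal I_X:=\{\{X\in\mathcal A\}:\mathbb P(X\in\mathcal A\triangle S_\tau\mathcal A)=0\ \forall\tau\}$. If $X$ is stationary with $\mathbb E[\#(X\cap A)]<\infty$ for bounded Borel $A\subset\mathbb R^d\times\mathcal K$, then $\psi[X]$ denotes the $\mathcal I_X$-measurable random measure on $\mathcal K$ such that $\mathbb E[\frac1{|A|}\sum_{(x,k)\in X,x\in A}f(k)\mid\mathcal I_X]=\int f\,d\psi[X]$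 a.s. for every nonnegative Borel $f$ and Borel $A\subset\mathbb R^d$ with $0<|A|<\infty$. Here $X$ is a stationary MPP with marks in $\mathcal K$ such that $\mathbb E[\#(X\cap A)]<\infty$ for every bounded Borel $A\subset\mathbb R^d\times\mathcal K$. $\Phi:=\mathrm{dom}\,X$ is the ground process, and $k_z$ denotes the mark with $(z,k_z)\in X$. *)

theory Defs
  imports "HOL-Probability.Probability"
begin

definition npts :: "'p set \<Rightarrow> 'p set \<Rightarrow> ennreal" where
  "npts Y A = emeasure (count_space UNIV) (Y \<inter> A)"

definition admissible :: "('a::metric_space \<times> 'k) set \<Rightarrow> bool" where
  "admissible Y \<longleftrightarrow>
     (\<forall>x k k'. (x, k) \<in> Y \<longrightarrow> (x, k') \<in> Y \<longrightarrow> k = k') \<and>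
     (\<forall>B. bounded B \<longrightarrow> finite (fst ` Y \<inter> B))"

definition mpp_space :: "('a::metric_space \<times> 'k::topological_space) set measure" where
  "mpp_space = sigma {Y. admissible Y}
     {{Y. admissible Y \<and> npts Y A = n} | A n. A \<in> sets borel}"

definition shift :: "'a::real_vector \<Rightarrow> ('a \<times> 'k) set \<Rightarrow> ('a \<times> 'k) set" where
  "shift \<tau> Y = (\<lambda>(y, k). (y - \<tau>, k)) ` Y"

definition is_mpp :: "'b measure \<Rightarrow> ('b \<Rightarrow> ('a::metric_space \<times> 'k::topological_space) set) \<Rightarrow> bool" where
  "is_mpp M X \<longleftrightarrow> X \<in> measurable M mpp_space"

definition stationary_mpp ::
  "'b measure \<Rightarrow> ('b \<Rightarrow> ('a::{real_normed_vector} \<times> 'k::topological_space) set) \<Rightarrow> bool" where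
  "stationary_mpp M X \<longleftrightarrow>
     is_mpp M X \<and> (\<forall>\<tau>. distr M mpp_space (\<lambda>\<omega>. shift \<tau> (X \<omega>)) = distr M mpp_space X)"

definition inv_events ::
  "'b measure \<Rightarrow> ('b \<Rightarrow> ('a::{real_normed_vector} \<times> 'k::topological_space) set) \<Rightarrow> 'b set set" where
  "inv_events M X =
     {X -` \<A> \<inter> space M | \<A>. \<A> \<in> sets mpp_space \<and>
        (\<forall>\<tau>. measure M {\<omega> \<in> space M. X \<omega> \<in> (\<A> - shift \<tau> ` \<A>) \<union> (shift \<tau> ` \<A> - \<A>)} = 0)}"

definition inv_sigma ::
  "'b measure \<Rightarrow> ('b \<Rightarrow> ('a::{real_normed_vector} \<times> 'k::topological_space) set) \<Rightarrow> 'b measure" where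
  "inv_sigma M X = sigma (space M) (inv_events M X)"

text \<open>psi is (a version of) the random intensity measure psi[X]: an I_X-measurable random
  measure on the mark space such that
  E[ |A|^{-1} sum_{(x,k) in X, x in A} f k | I_X ] = integral of f w.r.t. psi, a.s.\<close>
definition is_psi ::
  "'b measure \<Rightarrow> ('b \<Rightarrow> ('a::euclidean_space \<times> 'k::topological_space) set) \<Rightarrow> ('b \<Rightarrow> 'k measure) \<Rightarrow> bool" where
  "is_psi M X psi \<longleftrightarrow>
     (\<forall>\<omega>\<in>space M. sets (psi \<omega>) = sets borel) \<and>
     (\<forall>B \<in> sets borel. (\<lambda>\<omega>. emeasure (psi \<omega>) B) \<in> borel_measurable (inv_sigma M X)) \<and>
     (\<forall>f :: 'k \<Rightarrow> ennreal. \<forall>A :: 'a set.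
        f \<in> borel_measurable borel \<longrightarrow> A \<in> sets borel \<longrightarrow>
        0 < emeasure lborel A \<longrightarrow> emeasure lborel A < \<infinity> \<longrightarrow>
        (AE \<omega> in M. nn_cond_exp M (inv_sigma M X)
            (\<lambda>\<omega>. (\<integral>\<^sup>+ p. f (snd p) \<partial>count_space {p \<in> X \<omega>. fst p \<in> A}) / emeasure lborel A) \<omega>
          = (\<integral>\<^sup>+ k. f k \<partial>psi \<omega>)))"

definition mark :: "('a \<times> 'k) set \<Rightarrow> 'a \<Rightarrow> 'k" where
  "mark Y z = (THE k. (z, k) \<in> Y)"

end

theory Submission
  imports Defs
begin

text \<open>Write h \<le> m + (h - m)+, where (h - m)+ is the excess of h over m. The first part contributes
  at most m \<epsilon>^d #I(\<epsilon>), which tends to 0. The excess is controlled by a maximal inequality: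
  covering, by disjoint balls (Vitali), the lattice points z for which some ball B(z, r) with r \<ge> 1
  carries excess mark sum above t r^d, and averaging over lattice shifts, stationarity on an
  invariant event E bounds t P(E and sup_r r^-d (excess mark sum over B(0, r)) > t) by
  22^d E[1_E \<integral> (h - m)+ d\<psi>]. On E = {\<integral> h d\<psi> \<le> K} this tends to 0 as m \<rightarrow> \<infinity>, so almost surely
  for every t > 0 some m bounds the excess mark sum over B(0, r) by t r^d for all r \<ge> 1. As I(\<epsilon>)
  lies in a ball of radius at most 2R/\<epsilon>, the excess then contributes at most t (2R)^d.\<close>

section \<open>Configurations, shifts and mark sums\<close>

lemma mpp_generators_subset:
  "{{Y. admissible Y \<and> npts Y A = n} | A n. A \<in> sets borel}
     \<subseteq> Pow {Y::('a::metric_space \<times> 'k::topological_space) set. admissible Y}"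
  by auto

lemma space_mpp_space:
  "space (mpp_space :: ('a::metric_space \<times> 'k::topological_space) set measure) = {Y. admissible Y}"
  unfolding mpp_space_def by (rule space_measure_of[OF mpp_generators_subset])

lemma sets_mpp_space:
  "sets (mpp_space :: ('a::metric_space \<times> 'k::topological_space) set measure) =
     sigma_sets {Y. admissible Y} {{Y. admissible Y \<and> npts Y A = n} | A n. A \<in> sets borel}"
  unfolding mpp_space_def by (rule sets_measure_of[OF mpp_generators_subset])

lemma npts_level_set_in_mpp_space:
  fixes S :: "('a::metric_space \<times> 'k::topological_space) set"
  assumes "S \<in> sets borel"
  shows "{Y. admissible Y \<and> npts Y S = n} \<in> sets (mpp_space :: ('a \<times> 'k) set measure)"
  unfolding sets_mpp_space using assms by (intro sigma_sets.Basic) blast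

lemma measurable_npts:
  fixes S :: "('a::metric_space \<times> 'k::topological_space) set"
  assumes "S \<in> sets borel"
  shows "(\<lambda>Y. npts Y S) \<in> borel_measurable (mpp_space :: ('a \<times> 'k) set measure)"
proof -
  let ?V = "range (of_nat :: nat \<Rightarrow> ennreal) \<union> {\<infinity>}"
  have "npts Y S \<in> ?V" for Y :: "('a \<times> 'k) set"
    unfolding npts_def by (subst emeasure_count_space) auto
  moreover have "(\<lambda>Y. npts Y S) -` {n} \<inter> space mpp_space = {Y. admissible Y \<and> npts Y S = n}" for n
    by (auto simp: space_mpp_space)
  ultimately have "(\<lambda>Y. npts Y S) \<in> measurable (mpp_space :: ('a \<times> 'k) set measure) (count_space ?V)"
    using npts_level_set_in_mpp_space[OF assms]
    by (subst measurable_count_space_eq_countable) auto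
  then show ?thesis
    by (rule measurable_compose) (simp add: measurable_count_space_eq1)
qed

lemma shift_iff: "(y, k) \<in> shift \<tau> Y \<longleftrightarrow> (y + \<tau>, k) \<in> Y"
  unfolding shift_def by (force intro: image_eqI[where x = "(y + \<tau>, k)"])

lemma shift_shift: "shift a (shift b Y) = shift (a + b) Y"
  by (auto simp: shift_iff algebra_simps)

lemma shift_0 [simp]: "shift 0 Y = Y"
  by (auto simp: shift_iff)

lemma shift_minus_shift [simp]: "shift (- \<tau>) (shift \<tau> Y) = Y"
  by (simp add: shift_shift)

lemma inj_shift: "inj (shift \<tau>)"
  by (metis injI shift_minus_shift)

lemma admissible_shift:
  fixes Y :: "('a::real_normed_vector \<times> 'k) set"
  assumes "admissible Y"
  shows "admissible (shift \<tau> Y)"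
  unfolding admissible_def
proof (intro conjI allI impI)
  fix x k k' assume "(x, k) \<in> shift \<tau> Y" "(x, k') \<in> shift \<tau> Y"
  then show "k = k'" using assms unfolding admissible_def shift_iff by blast
next
  fix B :: "'a set" assume "bounded B"
  then have "bounded ((\<lambda>y. y + \<tau>) ` B)"
    using bounded_translation[of B \<tau>] by (simp add: add.commute)
  then have "finite (fst ` Y \<inter> (\<lambda>y. y + \<tau>) ` B)"
    using assms unfolding admissible_def by blast
  moreover have "fst ` shift \<tau> Y \<inter> B \<subseteq> (\<lambda>y. y - \<tau>) ` (fst ` Y \<inter> (\<lambda>y. y + \<tau>) ` B)"
    by (force simp: shift_iff image_iff)
  ultimately show "finite (fst ` shift \<tau> Y \<inter> B)"
    by (meson finite_imageI finite_subset)
qed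

lemma npts_shift:
  fixes Y :: "('a::real_normed_vector \<times> 'k) set"
  shows "npts (shift \<tau> Y) S = npts Y ((\<lambda>p. (fst p - \<tau>, snd p)) -` S)"
proof -
  let ?f = "\<lambda>p::'a \<times> 'k. (fst p - \<tau>, snd p)"
  have "inj_on ?f (Y \<inter> ?f -` S)"
    by (auto intro!: inj_onI simp: prod_eq_iff)
  moreover have "shift \<tau> Y \<inter> S = ?f ` (Y \<inter> ?f -` S)"
    unfolding shift_def by (auto simp: case_prod_beta)
  ultimately show ?thesis
    unfolding npts_def by (simp add: emeasure_count_space finite_image_iff card_image)
qed

lemma measurable_shift:
  "shift \<tau> \<in> measurable (mpp_space :: ('a::real_normed_vector \<times> 'k::topological_space) set measure) mpp_space"
proof -
  let ?G = "{{Y. admissible Y \<and> npts Y A = n} | A n. A \<in> sets borel} :: ('a \<times> 'k) set set set"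
  have "shift \<tau> \<in> measurable (mpp_space :: ('a \<times> 'k) set measure) (measure_of {Y. admissible Y} ?G (\<lambda>_. 0))"
  proof (rule measurable_measure_of[OF mpp_generators_subset])
    show "shift \<tau> \<in> space mpp_space \<rightarrow> {Y::('a \<times> 'k) set. admissible Y}"
      by (auto simp: space_mpp_space admissible_shift)
  next
    fix G assume "G \<in> ?G"
    then obtain A n where G: "G = {Y. admissible Y \<and> npts Y A = n}" and A: "A \<in> sets borel"
      by blast
    let ?f = "\<lambda>p::'a \<times> 'k. (fst p - \<tau>, snd p)"
    have "?f \<in> borel_measurable borel"
      by (intro borel_measurable_continuous_onI continuous_intros)
    then have "?f -` A \<in> sets borel"
      using A by (rule measurable_sets_borel)
    moreover have "shift \<tau> -` G \<inter> space mpp_space = {Y. admissible Y \<and> npts Y (?f -` A) = n}"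
      using G by (auto simp: space_mpp_space admissible_shift npts_shift)
    ultimately show "shift \<tau> -` G \<inter> space mpp_space \<in> sets (mpp_space :: ('a \<times> 'k) set measure)"
      by (simp add: npts_level_set_in_mpp_space)
  qed
  then show ?thesis unfolding mpp_space_def .
qed

lemma shift_image_eq_vimage:
  assumes "\<A> \<subseteq> space (mpp_space :: ('a::real_normed_vector \<times> 'k::topological_space) set measure)"
  shows "shift \<tau> ` \<A> = shift (- \<tau>) -` \<A> \<inter> space (mpp_space :: ('a \<times> 'k) set measure)"
proof (intro equalityI subsetI)
  fix Y assume "Y \<in> shift \<tau> ` \<A>"
  then show "Y \<in> shift (- \<tau>) -` \<A> \<inter> space (mpp_space :: ('a \<times> 'k) set measure)"
    using assms by (auto simp: space_mpp_space admissible_shift)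
next
  fix Y assume "Y \<in> shift (- \<tau>) -` \<A> \<inter> space (mpp_space :: ('a \<times> 'k) set measure)"
  then show "Y \<in> shift \<tau> ` \<A>"
    using shift_minus_shift[of "- \<tau>" Y] by (auto intro: image_eqI[where x = "shift (- \<tau>) Y"])
qed

lemma sets_shift_image:
  assumes "\<A> \<in> sets (mpp_space :: ('a::real_normed_vector \<times> 'k::topological_space) set measure)"
  shows "shift \<tau> ` \<A> \<in> sets (mpp_space :: ('a \<times> 'k) set measure)"
  using measurable_sets[OF measurable_shift assms] assms sets.sets_into_space
  by (subst shift_image_eq_vimage) blast+

definition mark_sum :: "('k \<Rightarrow> ennreal) \<Rightarrow> ('a \<times> 'k) set \<Rightarrow> 'a set \<Rightarrow> ennreal" where
  "mark_sum g Y B = (\<integral>\<^sup>+ p. g (snd p) \<partial>count_space {p \<in> Y. fst p \<in> B})"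

lemma mark_sum_count_space_UNIV:
  "mark_sum g Y B = (\<integral>\<^sup>+ p. g (snd p) * indicator {p \<in> Y. fst p \<in> B} p \<partial>count_space UNIV)"
  unfolding mark_sum_def by (rule nn_integral_count_space_indicator) simp

lemma mark_sum_indicator: "mark_sum (indicator C) Y B = npts Y (B \<times> C)"
proof -
  let ?S = "{p \<in> Y. fst p \<in> B}"
  have "mark_sum (indicator C) Y B = (\<integral>\<^sup>+ p. indicator {p \<in> ?S. snd p \<in> C} p \<partial>count_space ?S)"
    unfolding mark_sum_def by (intro nn_integral_cong) (auto simp: indicator_def)
  also have "\<dots> = emeasure (count_space ?S) (Y \<inter> (B \<times> C))"
    by (subst nn_integral_indicator) (auto intro: arg_cong2[where f = emeasure])
  also have "\<dots> = npts Y (B \<times> C)"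
    unfolding npts_def by (subst (1 2) emeasure_count_space) auto
  finally show ?thesis .
qed

lemma mark_sum_simple_function:
  fixes u :: "'k::topological_space \<Rightarrow> ennreal"
  assumes "simple_function borel u"
  shows "mark_sum u Y B = (\<Sum>c\<in>range u. c * npts Y (B \<times> u -` {c}))"
proof -
  have rep: "u k = (\<Sum>c\<in>range u. c * indicator (u -` {c}) k)" for k
    using simple_function_indicator_representation[OF assms, of k]
    unfolding space_borel Int_UNIV_right by blast
  have "mark_sum u Y B
      = (\<integral>\<^sup>+ p. (\<Sum>c\<in>range u. c * indicator (u -` {c}) (snd p)) \<partial>count_space {p \<in> Y. fst p \<in> B})"
    unfolding mark_sum_def by (subst rep) (rule refl)
  also have "\<dots> = (\<Sum>c\<in>range u. (\<integral>\<^sup>+ p. c * indicator (u -` {c}) (snd p) \<partial>count_space {p \<in> Y. fst p \<in> B}))"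
    by (rule nn_integral_sum) simp
  also have "\<dots> = (\<Sum>c\<in>range u. c * mark_sum (indicator (u -` {c})) Y B)"
    unfolding mark_sum_def by (simp add: nn_integral_cmult)
  finally show ?thesis by (simp add: mark_sum_indicator)
qed

lemma measurable_mark_sum:
  fixes g :: "'k::second_countable_topology \<Rightarrow> ennreal"
    and B :: "'a::{metric_space, second_countable_topology} set"
  assumes g: "g \<in> borel_measurable borel" and B: "B \<in> sets borel"
  shows "(\<lambda>Y. mark_sum g Y B) \<in> borel_measurable (mpp_space :: ('a \<times> 'k) set measure)"
proof -
  obtain u where u: "\<And>i. simple_function borel (u i)" "incseq u" "\<And>x. (SUP i. u i x) = g x"
    using borel_measurable_implies_simple_function_sequence'[OF g] by metis
  have "mark_sum g Y B = (SUP i. mark_sum (u i) Y B)" for Y :: "('a \<times> 'k) set"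
    unfolding mark_sum_def u(3)[symmetric] using u(2)
    by (intro nn_integral_monotone_convergence_SUP) (auto simp: incseq_def le_fun_def)
  moreover have "(\<lambda>Y. mark_sum (u i) Y B) \<in> borel_measurable (mpp_space :: ('a \<times> 'k) set measure)" for i
  proof -
    have "u i -` {c} \<in> sets borel" for c
      using borel_measurable_simple_function[OF u(1)] by (rule measurable_sets_borel) simp
    then have [measurable]:
        "(\<lambda>Y. npts Y (B \<times> u i -` {c})) \<in> borel_measurable (mpp_space :: ('a \<times> 'k) set measure)" for c
      using B by (intro measurable_npts) (simp add: borel_prod[symmetric])
    show ?thesis
      unfolding mark_sum_simple_function[OF u(1)] by measurable
  qed
  ultimately show ?thesis by simp
qed

lemma mark_sum_shift:
  fixes Y :: "('a::real_normed_vector \<times> 'k) set"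
  shows "mark_sum g (shift x Y) B = mark_sum g Y ((\<lambda>y. y - x) -` B)"
proof -
  have "bij_betw (\<lambda>p. (fst p - x, snd p)) {p \<in> Y. fst p \<in> (\<lambda>y. y - x) -` B} {p \<in> shift x Y. fst p \<in> B}"
    by (rule bij_betwI[where g = "\<lambda>p. (fst p + x, snd p)"]) (auto simp: shift_iff)
  from nn_integral_bij_count_space[OF this, of "\<lambda>p. g (snd p)"] show ?thesis
    unfolding mark_sum_def by simp
qed

lemma mark_sum_shift_ball:
  fixes Y :: "('a::real_normed_vector \<times> 'k) set"
  shows "mark_sum g (shift x Y) (ball 0 r) = mark_sum g Y (ball x r)"
proof -
  have "(\<lambda>y. y - x) -` ball 0 r = ball x r"
    by (auto simp: dist_norm norm_minus_commute)
  then show ?thesis by (simp add: mark_sum_shift)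
qed

lemma mark_sum_mono: "B \<subseteq> B' \<Longrightarrow> mark_sum g Y B \<le> mark_sum g Y B'"
  unfolding mark_sum_count_space_UNIV
  by (intro nn_integral_mono mult_left_mono) (auto simp: indicator_def)

lemma sum_mark_sum_disjoint:
  assumes "finite C" "disjoint_family_on B C"
  shows "(\<Sum>i\<in>C. mark_sum g Y (B i)) = mark_sum g Y (\<Union>i\<in>C. B i)"
proof -
  have "disjoint_family_on (\<lambda>i. {p \<in> Y. fst p \<in> B i}) C"
    using assms(2) unfolding disjoint_family_on_def by auto
  moreover have "{p \<in> Y. fst p \<in> (\<Union>i\<in>C. B i)} = (\<Union>i\<in>C. {p \<in> Y. fst p \<in> B i})"
    by auto
  ultimately show ?thesis
    unfolding mark_sum_count_space_UNIV using assms(1)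
    by (simp add: nn_integral_sum[symmetric] indicator_UN_disjoint sum_distrib_left)
qed

lemma mark_mem:
  assumes "admissible Y" and "z \<in> fst ` Y"
  shows "(z, mark Y z) \<in> Y"
proof -
  obtain k where k: "(z, k) \<in> Y" using assms(2) by force
  moreover have "k' = k" if "(z, k') \<in> Y" for k'
    using assms(1) k that unfolding admissible_def by blast
  ultimately show ?thesis
    unfolding mark_def by (rule theI)
qed

lemma sum_mark_le_mark_sum:
  assumes "admissible Y" and "I \<subseteq> fst ` Y \<inter> B" and "finite I"
  shows "(\<Sum>z\<in>I. g (mark Y z)) \<le> mark_sum g Y B"
proof -
  let ?T = "(\<lambda>z. (z, mark Y z)) ` I"
  have T: "?T \<subseteq> {p \<in> Y. fst p \<in> B}"
    using assms(1,2) mark_mem by fastforce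
  have "(\<Sum>z\<in>I. g (mark Y z)) = (\<Sum>p\<in>?T. g (snd p))"
    by (subst sum.reindex) (auto intro: inj_onI)
  also have "\<dots> = (\<integral>\<^sup>+ p. g (snd p) * indicator ?T p \<partial>count_space UNIV)"
    using assms(3) by (simp add: nn_integral_count_space_finite nn_integral_count_space_indicator[symmetric])
  also have "\<dots> \<le> mark_sum g Y B"
    unfolding mark_sum_count_space_UNIV using T
    by (intro nn_integral_mono mult_left_mono) (auto simp: indicator_def)
  finally show ?thesis .
qed

section \<open>A maximal inequality on the lattice\<close>

definition lattice_point :: "('a::euclidean_space \<Rightarrow> int) \<Rightarrow> 'a" where
  "lattice_point z = (\<Sum>b\<in>Basis. of_int (z b) *\<^sub>R b)"

definition lattice_cube :: "nat \<Rightarrow> ('a::euclidean_space \<Rightarrow> int) set" where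
  "lattice_cube N = PiE Basis (\<lambda>_. {- int N..int N})"

lemma inner_lattice_point: "b \<in> Basis \<Longrightarrow> lattice_point z \<bullet> b = of_int (z b)"
  unfolding lattice_point_def by (simp add: inner_sum_left inner_Basis if_distrib cong: if_cong)

lemma finite_lattice_cube: "finite (lattice_cube N)"
  unfolding lattice_cube_def by (intro finite_PiE) auto

lemma card_lattice_cube: "card (lattice_cube N :: ('a::euclidean_space \<Rightarrow> int) set) = (2 * N + 1) ^ DIM('a)"
  unfolding lattice_cube_def by (simp add: card_PiE nat_add_distrib nat_mult_distrib)

lemma card_int_interval_le:
  fixes a \<rho> :: real
  assumes "\<rho> \<ge> 0"
  shows "finite {w::int. \<bar>w - a\<bar> < \<rho>}" and "real (card {w::int. \<bar>w - a\<bar> < \<rho>}) \<le> 2 * \<rho> + 1"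
proof -
  have sub: "{w::int. \<bar>w - a\<bar> < \<rho>} \<subseteq> {\<lceil>a - \<rho>\<rceil>..\<lfloor>a + \<rho>\<rfloor>}"
    by (auto simp: abs_less_iff ceiling_le_iff le_floor_iff)
  then show fin: "finite {w::int. \<bar>w - a\<bar> < \<rho>}"
    by (rule finite_subset) simp
  have "real_of_int (\<lfloor>a + \<rho>\<rfloor> - \<lceil>a - \<rho>\<rceil> + 1) \<le> 2 * \<rho> + 1"
    using of_int_floor_le[of "a + \<rho>"] le_of_int_ceiling[of "a - \<rho>"] by linarith
  then have "real (card {\<lceil>a - \<rho>\<rceil>..\<lfloor>a + \<rho>\<rfloor>}) \<le> 2 * \<rho> + 1"
    using assms by (cases "\<lfloor>a + \<rho>\<rfloor> - \<lceil>a - \<rho>\<rceil> + 1 \<ge> 0") auto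
  moreover have "card {w::int. \<bar>w - a\<bar> < \<rho>} \<le> card {\<lceil>a - \<rho>\<rceil>..\<lfloor>a + \<rho>\<rfloor>}"
    using sub by (intro card_mono) auto
  ultimately show "real (card {w::int. \<bar>w - a\<bar> < \<rho>}) \<le> 2 * \<rho> + 1"
    by linarith
qed

lemma card_lattice_cube_ball_le:
  fixes c :: "'a::euclidean_space" and \<rho> :: real
  assumes "\<rho> \<ge> 0"
  shows "real (card {z \<in> lattice_cube N. lattice_point z \<in> ball c \<rho>}) \<le> (2 * \<rho> + 1) ^ DIM('a)"
proof -
  let ?P = "PiE Basis (\<lambda>b. {w::int. \<bar>w - c \<bullet> b\<bar> < \<rho>})"
  have "{z \<in> lattice_cube N. lattice_point z \<in> ball c \<rho>} \<subseteq> ?P"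
  proof (intro subsetI PiE_I)
    fix z b assume z: "z \<in> {z \<in> lattice_cube N. lattice_point z \<in> ball c \<rho>}"
    show "z b = undefined" if "b \<notin> Basis"
      using z that unfolding lattice_cube_def by auto
    assume b: "b \<in> Basis"
    have "\<bar>(lattice_point z - c) \<bullet> b\<bar> < \<rho>"
      using Basis_le_norm[OF b, of "lattice_point z - c"] z by (simp add: dist_norm norm_minus_commute)
    then show "z b \<in> {w. \<bar>w - c \<bullet> b\<bar> < \<rho>}"
      using b by (simp add: inner_diff_left inner_lattice_point)
  qed
  moreover have "finite ?P"
    using card_int_interval_le(1)[OF assms] by (intro finite_PiE) auto
  ultimately have "card {z \<in> lattice_cube N. lattice_point z \<in> ball c \<rho>} \<le> card ?P"
    by (rule card_mono[rotated])
  also have "real (card ?P) = (\<Prod>b\<in>Basis. real (card {w::int. \<bar>w - c \<bullet> b\<bar> < \<rho>}))"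
    by (simp add: card_PiE)
  also have "\<dots> \<le> (\<Prod>b\<in>(Basis::'a set). 2 * \<rho> + 1)"
    using card_int_interval_le(2)[OF assms] by (intro prod_mono) auto
  finally show ?thesis by simp
qed

lemma ball_lattice_point_subset_cbox:
  fixes z :: "'a::euclidean_space \<Rightarrow> int"
  assumes "z \<in> lattice_cube N" and "r \<le> real N"
  shows "ball (lattice_point z) r \<subseteq> cbox (- (2 * real N) *\<^sub>R One) ((2 * real N) *\<^sub>R One)"
proof (intro subsetI, unfold mem_box, intro ballI)
  fix x and b :: 'a
  assume x: "x \<in> ball (lattice_point z) r" and b: "b \<in> Basis"
  have "\<bar>x \<bullet> b - z b\<bar> < r"
    using Basis_le_norm[OF b, of "x - lattice_point z"] x
    by (simp add: dist_norm norm_minus_commute inner_diff_left inner_lattice_point b)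
  moreover have "\<bar>z b\<bar> \<le> int N"
    using PiE_mem[OF assms(1)[unfolded lattice_cube_def] b] by auto
  ultimately have "\<bar>x \<bullet> b\<bar> \<le> 2 * real N"
    using assms(2) by linarith
  then show "(- (2 * real N) *\<^sub>R One) \<bullet> b \<le> x \<bullet> b \<and> x \<bullet> b \<le> ((2 * real N) *\<^sub>R One) \<bullet> b"
    using b by (simp add: abs_le_iff)
qed

text \<open>The radii are at least 1, so a ball of radius 5 r around a lattice point contains at most
  (11 r)^d lattice points.\<close>
lemma lattice_vitali_covering:
  fixes rad :: "('a::euclidean_space \<Rightarrow> int) \<Rightarrow> real"
  assumes K: "K \<subseteq> lattice_cube N" and rad: "\<And>z. z \<in> K \<Longrightarrow> 1 \<le> rad z \<and> rad z \<le> real N"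
  obtains C where "C \<subseteq> K" "disjoint_family_on (\<lambda>z. ball (lattice_point z) (rad z)) C"
    "real (card K) \<le> (\<Sum>z\<in>C. (11 * rad z) ^ DIM('a))"
proof -
  have "lattice_point ` K \<subseteq> (\<Union>z\<in>K. ball (lattice_point z) (rad z))"
    using rad by force
  then obtain C where C: "C \<subseteq> K" "countable C"
      "pairwise (\<lambda>i j. disjnt (ball (lattice_point i) (rad i)) (ball (lattice_point j) (rad j))) C"
      "lattice_point ` K \<subseteq> (\<Union>z\<in>C. ball (lattice_point z) (5 * rad z))"
    using Vitali_covering_lemma_balls[where S = "lattice_point ` K" and K = K and a = lattice_point
        and r = rad and B = "real N"] rad by force
  have finC: "finite C"
    using C(1) K by (meson finite_lattice_cube finite_subset subset_trans)
  let ?near = "\<lambda>i. {z \<in> lattice_cube N. lattice_point z \<in> ball (lattice_point i) (5 * rad i)}"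
  have "K \<subseteq> (\<Union>i\<in>C. ?near i)"
    using C(4) K by blast
  then have "card K \<le> card (\<Union>i\<in>C. ?near i)"
    using finC by (intro card_mono finite_UN_I) (auto simp: finite_lattice_cube)
  also have "\<dots> \<le> (\<Sum>i\<in>C. card (?near i))"
    by (rule card_UN_le[OF finC])
  finally have "real (card K) \<le> (\<Sum>i\<in>C. real (card (?near i)))"
    by (simp only: of_nat_le_iff of_nat_sum[symmetric])
  also have "\<dots> \<le> (\<Sum>i\<in>C. (11 * rad i) ^ DIM('a))"
  proof (intro sum_mono)
    fix i assume "i \<in> C"
    then have "1 \<le> rad i" using rad C(1) by auto
    then have "real (card (?near i)) \<le> (2 * (5 * rad i) + 1) ^ DIM('a)"
      by (intro card_lattice_cube_ball_le) simp
    also have "\<dots> \<le> (11 * rad i) ^ DIM('a)"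
      using \<open>1 \<le> rad i\<close> by (intro power_mono) auto
    finally show "real (card (?near i)) \<le> (11 * rad i) ^ DIM('a)" .
  qed
  finally have "real (card K) \<le> (\<Sum>i\<in>C. (11 * rad i) ^ DIM('a))" .
  moreover have "disjoint_family_on (\<lambda>z. ball (lattice_point z) (rad z)) C"
    using C(3) unfolding disjoint_family_on_def pairwise_def disjnt_def by blast
  ultimately show ?thesis
    using C(1) that by blast
qed

lemma lattice_maximal_inequality:
  fixes Y :: "('a::euclidean_space \<times> 'k) set" and g :: "'k \<Rightarrow> ennreal"
  assumes t: "t > 0"
  shows "ennreal t * of_nat (card {z \<in> lattice_cube N.
      \<exists>r\<in>{1..N}. t * real r ^ DIM('a) < mark_sum g Y (ball (lattice_point z) r)})
    \<le> 11 ^ DIM('a) * mark_sum g Y (cbox (- (2 * real N) *\<^sub>R One) ((2 * real N) *\<^sub>R One))"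
proof -
  let ?d = "DIM('a)"
  define K where
    "K = {z \<in> lattice_cube N. \<exists>r\<in>{1..N}. t * real r ^ ?d < mark_sum g Y (ball (lattice_point z) r)}"
  have "\<forall>z\<in>K. \<exists>r. r \<in> {1..N} \<and> ennreal (t * real r ^ ?d) < mark_sum g Y (ball (lattice_point z) r)"
    unfolding K_def by blast
  then obtain r where r: "\<And>z. z \<in> K \<Longrightarrow>
      r z \<in> {1..N} \<and> ennreal (t * real (r z) ^ ?d) < mark_sum g Y (ball (lattice_point z) (r z))"
    by metis
  have K: "K \<subseteq> lattice_cube N"
    unfolding K_def by blast
  moreover have "\<And>z. z \<in> K \<Longrightarrow> 1 \<le> real (r z) \<and> real (r z) \<le> real N"
    using r by auto
  ultimately obtain C where C: "C \<subseteq> K" "disjoint_family_on (\<lambda>z. ball (lattice_point z) (r z)) C"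
    and card_K: "card K \<le> (\<Sum>z\<in>C. (11 * real (r z)) ^ ?d)"
    by (rule lattice_vitali_covering)
  have finC: "finite C"
    using C(1) K by (rule finite_subset[OF _ finite_subset[OF _ finite_lattice_cube]])
  have "(\<Union>z\<in>C. ball (lattice_point z) (r z)) \<subseteq> cbox (- (2 * real N) *\<^sub>R One) ((2 * real N) *\<^sub>R One)"
    using C(1) K r by (intro UN_least ball_lattice_point_subset_cbox) auto
  have "ennreal t * of_nat (card K) = ennreal (t * card K)"
    using t by (simp add: ennreal_mult ennreal_of_nat_eq_real_of_nat)
  also have "\<dots> \<le> ennreal (11 ^ ?d * (\<Sum>z\<in>C. t * real (r z) ^ ?d))"
    using mult_left_mono[OF card_K, of t] t
    by (intro ennreal_leI) (simp add: sum_distrib_left power_mult_distrib mult_ac)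
  also have "\<dots> = ennreal (11 ^ ?d) * ennreal (\<Sum>z\<in>C. t * real (r z) ^ ?d)"
    using t by (intro ennreal_mult) (auto intro: sum_nonneg)
  also have "\<dots> = 11 ^ ?d * (\<Sum>z\<in>C. ennreal (t * real (r z) ^ ?d))"
    using t by (subst sum_ennreal) (auto simp: ennreal_power[symmetric])
  also have "\<dots> \<le> 11 ^ ?d * (\<Sum>z\<in>C. mark_sum g Y (ball (lattice_point z) (r z)))"
    using r C(1) by (intro mult_left_mono sum_mono) (auto intro: less_imp_le)
  also have "\<dots> = 11 ^ ?d * mark_sum g Y (\<Union>z\<in>C. ball (lattice_point z) (r z))"
    by (simp add: sum_mark_sum_disjoint[OF finC C(2)])
  also have "\<dots> \<le> 11 ^ ?d * mark_sum g Y (cbox (- (2 * real N) *\<^sub>R One) ((2 * real N) *\<^sub>R One))"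
    using \<open>(\<Union>z\<in>C. _) \<subseteq> _\<close> by (intro mult_left_mono mark_sum_mono) auto
  finally show ?thesis
    unfolding K_def .
qed

definition maximal_exceeds :: "('k \<Rightarrow> ennreal) \<Rightarrow> real \<Rightarrow> nat \<Rightarrow> ('a::euclidean_space \<times> 'k) set set" where
  "maximal_exceeds g t N =
     {Y. admissible Y \<and> (\<exists>r\<in>{1..N}. t * real r ^ DIM('a) < mark_sum g Y (ball 0 r))}"

lemma maximal_exceeds_mono: "N \<le> N' \<Longrightarrow> maximal_exceeds g t N \<subseteq> maximal_exceeds g t N'"
  unfolding maximal_exceeds_def by auto

lemma sets_maximal_exceeds:
  fixes g :: "'k::second_countable_topology \<Rightarrow> ennreal"
  assumes "g \<in> borel_measurable borel"
  shows "(maximal_exceeds g t N :: ('a::euclidean_space \<times> 'k) set set) \<in> sets mpp_space"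
proof -
  have [measurable]:
      "(\<lambda>Y. mark_sum g Y (ball 0 r)) \<in> borel_measurable (mpp_space :: ('a \<times> 'k) set measure)" for r
    using assms by (rule measurable_mark_sum) simp
  have "{Y \<in> space mpp_space. \<exists>r\<in>{1..N}. t * real r ^ DIM('a) < mark_sum g Y (ball 0 r)}
      \<in> sets (mpp_space :: ('a \<times> 'k) set measure)"
    by measurable
  then show ?thesis
    unfolding maximal_exceeds_def space_mpp_space by (simp add: Collect_conj_eq)
qed

lemma not_in_maximal_exceeds_iff:
  fixes Y :: "('a::euclidean_space \<times> 'k) set"
  assumes "admissible Y"
  shows "(\<forall>N. Y \<notin> maximal_exceeds g t N) \<longleftrightarrow> (\<forall>r\<ge>1. mark_sum g Y (ball 0 (real r)) \<le> t * real r ^ DIM('a))"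
  using assms unfolding maximal_exceeds_def
  by (auto simp: not_less) (metis atLeastAtMost_iff order_refl)

lemma card_shift_maximal_exceeds_le:
  fixes Y :: "('a::euclidean_space \<times> 'k) set"
  assumes "admissible Y" and "t > 0"
  shows "ennreal t * of_nat (card {z \<in> lattice_cube N. shift (lattice_point z) Y \<in> maximal_exceeds g t N})
    \<le> 11 ^ DIM('a) * mark_sum g Y (cbox (- (2 * real N) *\<^sub>R One) ((2 * real N) *\<^sub>R One))"
proof -
  have "{z \<in> lattice_cube N. shift (lattice_point z) Y \<in> maximal_exceeds g t N}
      = {z \<in> lattice_cube N. \<exists>r\<in>{1..N}. t * real r ^ DIM('a) < mark_sum g Y (ball (lattice_point z) r)}"
    using assms(1) by (simp add: maximal_exceeds_def admissible_shift mark_sum_shift_ball)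
  then show ?thesis
    using lattice_maximal_inequality[OF assms(2)] by simp
qed

lemma emeasure_lborel_centered_cbox:
  assumes "r \<ge> 0"
  shows "emeasure lborel (cbox (- r *\<^sub>R One) (r *\<^sub>R One :: 'a::euclidean_space))
    = ennreal ((2 * r) ^ DIM('a))"
proof -
  have "(r *\<^sub>R One - (- r *\<^sub>R One)) \<bullet> b = 2 * r" if "b \<in> (Basis :: 'a set)" for b
    using that by (simp add: inner_diff_left inner_add_left)
  then show ?thesis
    using assms by (simp add: emeasure_lborel_cbox_eq)
qed

lemma ennreal_four_mult_power_le: "ennreal ((4 * real N) ^ d) \<le> 2 ^ d * of_nat ((2 * N + 1) ^ d)"
proof -
  have "(4 * real N) ^ d \<le> 2 ^ d * real ((2 * N + 1) ^ d)"
    unfolding of_nat_power power_mult_distrib[symmetric] by (intro power_mono) auto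
  then have "ennreal ((4 * real N) ^ d) \<le> ennreal (2 ^ d * real ((2 * N + 1) ^ d))"
    by (rule ennreal_leI)
  also have "\<dots> = 2 ^ d * of_nat ((2 * N + 1) ^ d)"
    by (simp add: ennreal_mult ennreal_power[symmetric] ennreal_of_nat_eq_real_of_nat del: of_nat_power)
  finally show ?thesis .
qed

section \<open>The pathwise estimate\<close>

text \<open>Since ennreal truncates at 0, ennreal (h k - m) is the excess (h k - m)+ of h over m.\<close>
lemma sum_mark_le_card_plus_excess:
  fixes Y :: "('a::metric_space \<times> 'k) set" and h :: "'k \<Rightarrow> real"
  assumes "admissible Y" and "I \<subseteq> fst ` Y \<inter> B" and "finite I" and "c \<ge> 0"
    and bound: "mark_sum (\<lambda>k. ennreal (h k - real m)) Y B \<le> c"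
  shows "(\<Sum>z\<in>I. h (mark Y z)) \<le> real m * card I + c"
proof -
  have "ennreal (\<Sum>z\<in>I. max (h (mark Y z) - real m) 0) = (\<Sum>z\<in>I. ennreal (h (mark Y z) - real m))"
    by (simp add: sum_ennreal[symmetric] ennreal_max_0)
  also have "\<dots> \<le> mark_sum (\<lambda>k. ennreal (h k - real m)) Y B"
    using assms(1-3) by (rule sum_mark_le_mark_sum)
  also have "\<dots> \<le> ennreal c"
    by (rule bound)
  finally have excess: "(\<Sum>z\<in>I. max (h (mark Y z) - real m) 0) \<le> c"
    using ennreal_le_iff[OF \<open>c \<ge> 0\<close>] by blast
  have "(\<Sum>z\<in>I. h (mark Y z)) \<le> (\<Sum>z\<in>I. real m + max (h (mark Y z) - real m) 0)"
    by (intro sum_mono) linarith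
  also have "\<dots> = real m * card I + (\<Sum>z\<in>I. max (h (mark Y z) - real m) 0)"
    by (simp add: sum.distrib)
  finally show ?thesis
    using excess by linarith
qed

lemma scaled_sum_mark_le:
  fixes Y :: "('a::euclidean_space \<times> 'k) set" and h :: "'k \<Rightarrow> real"
  assumes adm: "admissible Y" and \<epsilon>: "0 < \<epsilon>" "\<epsilon> < R" and A: "A \<subseteq> ball 0 R"
    and I: "I \<subseteq> fst ` Y \<inter> (\<lambda>a. inverse \<epsilon> *\<^sub>R a) ` A" and t: "t \<ge> 0"
    and bound: "\<forall>r\<ge>1. mark_sum (\<lambda>k. ennreal (h k - real m)) Y (ball 0 (real r)) \<le> t * real r ^ DIM('a)"
  shows "\<epsilon> ^ DIM('a) * (\<Sum>z\<in>I. h (mark Y z)) \<le> real m * (\<epsilon> ^ DIM('a) * card I) + t * (2 * R) ^ DIM('a)"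
proof -
  define r where "r = nat \<lceil>R / \<epsilon>\<rceil>"
  have "1 < R / \<epsilon>"
    using \<epsilon> by simp
  then have r: "1 \<le> r" "R / \<epsilon> \<le> real r" "real r \<le> R / \<epsilon> + 1"
    unfolding r_def by linarith+
  have "\<epsilon> * real r \<le> \<epsilon> * (R / \<epsilon> + 1)"
    using r(3) \<epsilon> by (intro mult_left_mono) auto
  also have "\<dots> = R + \<epsilon>"
    using \<epsilon> by (simp add: distrib_left)
  finally have "(\<epsilon> * real r) ^ DIM('a) \<le> (2 * R) ^ DIM('a)"
    using \<epsilon> by (intro power_mono) auto
  then have scale: "\<epsilon> ^ DIM('a) * real r ^ DIM('a) \<le> (2 * R) ^ DIM('a)"
    by (simp only: power_mult_distrib)
  have I_ball: "I \<subseteq> fst ` Y \<inter> ball 0 (real r)"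
  proof
    fix z assume "z \<in> I"
    then obtain a where "a \<in> A" "z = inverse \<epsilon> *\<^sub>R a" "z \<in> fst ` Y"
      using I by blast
    moreover have "norm a < R"
      using A \<open>a \<in> A\<close> by auto
    then have "norm z < R / \<epsilon>"
      using \<open>z = inverse \<epsilon> *\<^sub>R a\<close> \<epsilon> by (simp add: divide_strict_right_mono field_simps)
    with \<open>z \<in> fst ` Y\<close> show "z \<in> fst ` Y \<inter> ball 0 (real r)"
      using r(2) by simp
  qed
  moreover have "finite I"
    using adm I_ball unfolding admissible_def by (meson bounded_ball finite_subset)
  ultimately have "(\<Sum>z\<in>I. h (mark Y z)) \<le> real m * card I + t * real r ^ DIM('a)"
    using bound r(1) t by (intro sum_mark_le_card_plus_excess[OF adm, where B = "ball 0 (real r)"]) auto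
  then have "\<epsilon> ^ DIM('a) * (\<Sum>z\<in>I. h (mark Y z)) \<le> \<epsilon> ^ DIM('a) * (real m * card I + t * real r ^ DIM('a))"
    using \<epsilon> by (intro mult_left_mono) auto
  also have "\<dots> = real m * (\<epsilon> ^ DIM('a) * card I) + t * (\<epsilon> ^ DIM('a) * real r ^ DIM('a))"
    by (simp add: algebra_simps)
  also have "\<dots> \<le> real m * (\<epsilon> ^ DIM('a) * card I) + t * (2 * R) ^ DIM('a)"
    using scale t by (intro add_left_mono mult_left_mono)
  finally show ?thesis .
qed

lemma tendsto_scaled_sum_mark:
  fixes Y :: "('a::euclidean_space \<times> 'k) set" and h :: "'k \<Rightarrow> real" and I :: "real \<Rightarrow> 'a set"
  assumes adm: "admissible Y" and h_nonneg: "\<And>k. h k \<ge> 0" and "bounded A"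
    and I: "\<And>\<epsilon>. \<epsilon> > 0 \<Longrightarrow> I \<epsilon> \<subseteq> fst ` Y \<inter> (\<lambda>a. inverse \<epsilon> *\<^sub>R a) ` A"
    and card: "((\<lambda>\<epsilon>. \<epsilon> ^ DIM('a) * real (card (I \<epsilon>))) \<longlongrightarrow> 0) (at_right 0)"
    and excess: "\<And>n. \<exists>m::nat. \<forall>r\<ge>1.
      mark_sum (\<lambda>k. ennreal (h k - real m)) Y (ball 0 (real r)) \<le> inverse (Suc n) * real r ^ DIM('a)"
  shows "((\<lambda>\<epsilon>. \<epsilon> ^ DIM('a) * (\<Sum>z\<in>I \<epsilon>. h (mark Y z))) \<longlongrightarrow> 0) (at_right 0)"
proof (rule tendstoI)
  let ?d = "DIM('a)"
  fix e :: real assume "e > 0"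
  obtain R where R: "R > 0" "A \<subseteq> ball 0 R"
    using bounded_subset_ballD[OF \<open>bounded A\<close>] by blast
  have "0 < e / (2 * (2 * R) ^ ?d)"
    using \<open>e > 0\<close> R(1) by simp
  then obtain n where "inverse (Suc n) < e / (2 * (2 * R) ^ ?d)"
    using reals_Archimedean by blast
  then have t_R: "inverse (Suc n) * (2 * R) ^ ?d < e / 2"
    using R(1) by (simp add: field_simps)
  obtain m where
    m: "\<forall>r\<ge>1. mark_sum (\<lambda>k. ennreal (h k - real m)) Y (ball 0 (real r)) \<le> inverse (Suc n) * real r ^ ?d"
    using excess by blast
  have "eventually (\<lambda>\<epsilon>. \<epsilon> ^ ?d * real (card (I \<epsilon>)) < e / (2 * (real m + 1))) (at_right 0)"
    using \<open>e > 0\<close> by (intro order_tendstoD(2)[OF card]) simp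
  moreover have "eventually (\<lambda>\<epsilon>. 0 < \<epsilon> \<and> \<epsilon> < R) (at_right (0::real))"
    unfolding eventually_at_right_field using R(1) by blast
  ultimately show "eventually (\<lambda>\<epsilon>. dist (\<epsilon> ^ ?d * (\<Sum>z\<in>I \<epsilon>. h (mark Y z))) 0 < e) (at_right 0)"
  proof eventually_elim
    case (elim \<epsilon>)
    have "real m * (\<epsilon> ^ ?d * card (I \<epsilon>)) \<le> (real m + 1) * (\<epsilon> ^ ?d * card (I \<epsilon>))"
      using elim by (intro mult_right_mono) auto
    also have "\<dots> < (real m + 1) * (e / (2 * (real m + 1)))"
      using elim(1) by (intro mult_strict_left_mono) auto
    also have "\<dots> = e / 2"
      by (simp add: field_simps)
    finally have "real m * (\<epsilon> ^ ?d * card (I \<epsilon>)) < e / 2" .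
    moreover have "\<epsilon> ^ ?d * (\<Sum>z\<in>I \<epsilon>. h (mark Y z))
        \<le> real m * (\<epsilon> ^ ?d * card (I \<epsilon>)) + inverse (Suc n) * (2 * R) ^ ?d"
      using elim(2) I[of \<epsilon>] by (intro scaled_sum_mark_le[OF adm _ _ R(2) _ _ m]) auto
    moreover have "0 \<le> \<epsilon> ^ ?d * (\<Sum>z\<in>I \<epsilon>. h (mark Y z))"
      using elim(2) h_nonneg by (simp add: sum_nonneg)
    ultimately show ?case
      using t_R by (simp add: dist_real_def)
  qed
qed

lemma tendsto_nn_integral_decreasing_0:
  fixes f :: "nat \<Rightarrow> 'a \<Rightarrow> ennreal"
  assumes mono: "\<And>i. AE x in M. f (Suc i) x \<le> f i x" and [measurable]: "\<And>i. f i \<in> borel_measurable M"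
    and fin: "(\<integral>\<^sup>+x. f 0 x \<partial>M) < \<infinity>" and lim: "AE x in M. (\<lambda>i. f i x) \<longlonglongrightarrow> 0"
  shows "(\<lambda>i. \<integral>\<^sup>+x. f i x \<partial>M) \<longlonglongrightarrow> 0"
proof -
  have "AE x in M. \<forall>i. f (Suc i) x \<le> f i x"
    using mono by (simp add: AE_all_countable)
  with lim have "AE x in M. (INF i. f i x) = 0"
  proof eventually_elim
    case (elim x)
    then have "decseq (\<lambda>i. f i x)"
      by (intro decseq_SucI) blast
    then show ?case
      using LIMSEQ_INF LIMSEQ_unique elim(1) by blast
  qed
  then have "(INF i. \<integral>\<^sup>+x. f i x \<partial>M) = 0"
    by (simp add: nn_integral_monotone_convergence_INF_AE'[OF mono _ fin, symmetric] nn_integral_cong_AE)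
  moreover have "decseq (\<lambda>i. \<integral>\<^sup>+x. f i x \<partial>M)"
    using mono by (intro decseq_SucI nn_integral_mono_AE)
  ultimately show ?thesis
    using LIMSEQ_INF by fastforce
qed

lemma tendsto_nn_integral_excess:
  assumes "sets N = sets borel" and h: "h \<in> borel_measurable borel"
    and fin: "(\<integral>\<^sup>+k. ennreal (h k) \<partial>N) < \<infinity>"
  shows "(\<lambda>m. \<integral>\<^sup>+k. ennreal (h k - real m) \<partial>N) \<longlonglongrightarrow> 0"
proof (rule tendsto_nn_integral_decreasing_0)
  show "(\<lambda>k. ennreal (h k - real m)) \<in> borel_measurable N" for m
    using h by (simp add: measurable_cong_sets[OF assms(1) refl])
  show "AE k in N. ennreal (h k - real (Suc m)) \<le> ennreal (h k - real m)" for m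
    by (intro AE_I2 ennreal_leI) auto
  show "AE k in N. (\<lambda>m. ennreal (h k - real m)) \<longlonglongrightarrow> 0"
  proof (intro AE_I2 tendsto_eventually eventually_sequentiallyI)
    fix k and m :: nat assume "nat \<lceil>h k\<rceil> \<le> m"
    then show "ennreal (h k - real m) = 0"
      by (simp add: ennreal_eq_0_iff)
  qed
qed (use fin in simp)

section \<open>Stationary marked point processes\<close>

locale stationary_marked_process = prob_space M for M :: "'b measure" +
  fixes X :: "'b \<Rightarrow> ('a::euclidean_space \<times> 'k::second_countable_topology) set"
  assumes stationary: "stationary_mpp M X"
begin

lemma measurable_X [measurable]: "X \<in> measurable M mpp_space"
  using stationary unfolding stationary_mpp_def is_mpp_def by blast

lemma measurable_shift_X [measurable]: "(\<lambda>\<omega>. shift x (X \<omega>)) \<in> measurable M mpp_space"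
  using measurable_comp[OF measurable_X measurable_shift] by (simp add: comp_def)

lemma admissible_X: "\<omega> \<in> space M \<Longrightarrow> admissible (X \<omega>)"
  using measurable_space[OF measurable_X] by (auto simp: space_mpp_space)

lemma emeasure_shift_X:
  assumes "S \<in> sets mpp_space"
  shows "emeasure M {\<omega> \<in> space M. shift x (X \<omega>) \<in> S} = emeasure M {\<omega> \<in> space M. X \<omega> \<in> S}"
proof -
  have "emeasure (distr M mpp_space (\<lambda>\<omega>. shift x (X \<omega>))) S = emeasure (distr M mpp_space X) S"
    using stationary unfolding stationary_mpp_def by simp
  then show ?thesis
    using assms by (simp add: emeasure_distr vimage_def Int_def conj_commute)
qed

lemma inv_events_subset_sets: "inv_events M X \<subseteq> sets M"
  unfolding inv_events_def using measurable_sets[OF measurable_X] by blast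

lemma inv_events_subset_Pow: "inv_events M X \<subseteq> Pow (space M)"
  unfolding inv_events_def by blast

lemma space_inv_sigma: "space (inv_sigma M X) = space M"
  unfolding inv_sigma_def by (rule space_measure_of[OF inv_events_subset_Pow])

lemma sets_inv_sigma: "sets (inv_sigma M X) = sigma_sets (space M) (inv_events M X)"
  unfolding inv_sigma_def by (rule sets_measure_of[OF inv_events_subset_Pow])

lemma subalgebra_inv_sigma: "subalgebra M (inv_sigma M X)"
  unfolding subalgebra_def space_inv_sigma sets_inv_sigma
  using inv_events_subset_sets by (simp add: sets.sigma_sets_subset)

lemma sets_inv_sigma_subset: "E \<in> sets (inv_sigma M X) \<Longrightarrow> E \<in> sets M"
  using subalgebra_inv_sigma unfolding subalgebra_def by blast

sublocale inv: finite_measure_subalgebra M "inv_sigma M X"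
  by unfold_locales (rule subalgebra_inv_sigma)

lemma inv_eventsE:
  assumes "E \<in> inv_events M X"
  obtains A where "E = X -` A \<inter> space M" "A \<in> sets mpp_space"
    "\<And>\<tau>. {\<omega> \<in> space M. X \<omega> \<in> sym_diff A (shift \<tau> ` A)} \<in> null_sets M"
proof -
  obtain A where A: "E = X -` A \<inter> space M" "A \<in> sets mpp_space"
    and defect: "\<And>\<tau>. measure M {\<omega> \<in> space M. X \<omega> \<in> sym_diff A (shift \<tau> ` A)} = 0"
    using assms unfolding inv_events_def by blast
  have "{\<omega> \<in> space M. X \<omega> \<in> sym_diff A (shift \<tau> ` A)} \<in> null_sets M" for \<tau>
    using defect[of \<tau>] measurable_sets_Collect[OF measurable_X] sets_shift_image[OF A(2)] A(2)
    by (auto simp: null_sets_def emeasure_eq_measure)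
  with A that show ?thesis by blast
qed

lemma Int_stable_inv_events: "Int_stable (inv_events M X)"
proof (rule Int_stableI)
  fix a b assume "a \<in> inv_events M X" "b \<in> inv_events M X"
  obtain A where a: "a = X -` A \<inter> space M" and A: "A \<in> sets mpp_space"
      and null_A: "\<And>\<tau>. {\<omega> \<in> space M. X \<omega> \<in> sym_diff A (shift \<tau> ` A)} \<in> null_sets M"
    using \<open>a \<in> inv_events M X\<close> by (rule inv_eventsE) blast
  obtain B where b: "b = X -` B \<inter> space M" and B: "B \<in> sets mpp_space"
      and null_B: "\<And>\<tau>. {\<omega> \<in> space M. X \<omega> \<in> sym_diff B (shift \<tau> ` B)} \<in> null_sets M"
    using \<open>b \<in> inv_events M X\<close> by (rule inv_eventsE) blast
  have "measure M {\<omega> \<in> space M. X \<omega> \<in> sym_diff (A \<inter> B) (shift \<tau> ` (A \<inter> B))} = 0" for \<tau>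
  proof -
    have "shift \<tau> ` (A \<inter> B) = shift \<tau> ` A \<inter> shift \<tau> ` B"
      by (rule image_Int[OF inj_shift])
    then have "{\<omega> \<in> space M. X \<omega> \<in> sym_diff (A \<inter> B) (shift \<tau> ` (A \<inter> B))}
        \<subseteq> {\<omega> \<in> space M. X \<omega> \<in> sym_diff A (shift \<tau> ` A)}
          \<union> {\<omega> \<in> space M. X \<omega> \<in> sym_diff B (shift \<tau> ` B)}"
      by blast
    moreover have "{\<omega> \<in> space M. X \<omega> \<in> sym_diff (A \<inter> B) (shift \<tau> ` (A \<inter> B))} \<in> sets M"
      using A B sets_shift_image[of "A \<inter> B"] by (intro measurable_sets_Collect[OF measurable_X]) auto
    ultimately show ?thesis
      by (intro measure_eq_0_null_sets null_sets_subset[OF null_sets.Un[OF null_A null_B]])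
  qed
  moreover have "a \<inter> b = X -` (A \<inter> B) \<inter> space M"
    using a b by auto
  ultimately show "a \<inter> b \<in> inv_events M X"
    unfolding inv_events_def using A B by (intro CollectI exI[of _ "A \<inter> B"]) auto
qed

lemma emeasure_inv_event_Int_shift_X:
  assumes E: "E \<in> inv_events M X" and S: "S \<in> sets mpp_space"
  shows "emeasure M (E \<inter> {\<omega> \<in> space M. shift x (X \<omega>) \<in> S}) = emeasure M (E \<inter> {\<omega> \<in> space M. X \<omega> \<in> S})"
proof -
  obtain A where E_eq: "E = X -` A \<inter> space M" and A: "A \<in> sets mpp_space"
    and null: "\<And>\<tau>. {\<omega> \<in> space M. X \<omega> \<in> sym_diff A (shift \<tau> ` A)} \<in> null_sets M"
    using E by (rule inv_eventsE) blast
  have shift_A: "shift (- x) ` A = shift x -` A \<inter> space mpp_space"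
    using shift_image_eq_vimage[of A "- x"] sets.sets_into_space[OF A] by simp
  have "AE \<omega> in M. X \<omega> \<in> A \<longleftrightarrow> shift x (X \<omega>) \<in> A"
    using AE_not_in[OF null[of "- x"]] AE_space
    by eventually_elim (use measurable_space[OF measurable_X] in \<open>auto simp: shift_A\<close>)
  then have "emeasure M (E \<inter> {\<omega> \<in> space M. shift x (X \<omega>) \<in> S})
      = emeasure M {\<omega> \<in> space M. shift x (X \<omega>) \<in> A \<inter> S}"
    using A S unfolding E_eq by (intro emeasure_eq_AE) auto
  also have "\<dots> = emeasure M {\<omega> \<in> space M. X \<omega> \<in> A \<inter> S}"
    using A S by (intro emeasure_shift_X) auto
  also have "{\<omega> \<in> space M. X \<omega> \<in> A \<inter> S} = E \<inter> {\<omega> \<in> space M. X \<omega> \<in> S}"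
    unfolding E_eq by auto
  finally show ?thesis .
qed

lemma emeasure_inv_Int_shift_X:
  assumes E: "E \<in> sets (inv_sigma M X)" and S: "S \<in> sets mpp_space"
  shows "emeasure M (E \<inter> {\<omega> \<in> space M. shift x (X \<omega>) \<in> S}) = emeasure M (E \<inter> {\<omega> \<in> space M. X \<omega> \<in> S})"
proof -
  define S\<^sub>x where "S\<^sub>x = {\<omega> \<in> space M. shift x (X \<omega>) \<in> S}"
  define S\<^sub>0 where "S\<^sub>0 = {\<omega> \<in> space M. X \<omega> \<in> S}"
  have sets: "S\<^sub>x \<in> sets M" "S\<^sub>0 \<in> sets M"
    unfolding S\<^sub>x_def S\<^sub>0_def using S by measurable
  have emeasure_compl_Int: "emeasure M ((space M - a) \<inter> T) = emeasure M T - emeasure M (a \<inter> T)"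
    if "a \<in> sets M" "T \<in> sets M" for a T
    using that by (subst emeasure_Diff[symmetric])
      (auto intro!: arg_cong[where f = "emeasure M"] dest: sets.sets_into_space)
  have emeasure_UN_Int: "emeasure M ((\<Union>i. F i) \<inter> T) = (\<Sum>i. emeasure M (F i \<inter> T))"
    if "disjoint_family F" "range F \<subseteq> sets M" "T \<in> sets M" for F :: "nat \<Rightarrow> 'b set" and T
    using that by (subst suminf_emeasure) (auto simp: disjoint_family_on_def)
  have inv_sets: "sigma_sets (space M) (inv_events M X) \<subseteq> sets M"
    using inv_events_subset_sets by (simp add: sets.sigma_sets_subset)
  have "E \<in> sigma_sets (space M) (inv_events M X)"
    using E sets_inv_sigma by simp
  then have "emeasure M (E \<inter> S\<^sub>x) = emeasure M (E \<inter> S\<^sub>0)"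
  proof (induction rule: sigma_sets_induct_disjoint[OF Int_stable_inv_events inv_events_subset_Pow,
        consumes 1, case_names generator empty compl union])
    case (generator a)
    then show ?case
      unfolding S\<^sub>x_def S\<^sub>0_def using S by (rule emeasure_inv_event_Int_shift_X)
  next
    case empty
    then show ?case by simp
  next
    case (compl a)
    have "emeasure M S\<^sub>x = emeasure M S\<^sub>0"
      unfolding S\<^sub>x_def S\<^sub>0_def using S by (rule emeasure_shift_X)
    with compl inv_sets sets show ?case
      by (simp add: emeasure_compl_Int subset_iff)
  next
    case (union F)
    then show ?case
      using inv_sets sets by (simp add: emeasure_UN_Int)
  qed
  then show ?thesis
    unfolding S\<^sub>x_def S\<^sub>0_def .
qed

lemma nn_integral_inv_mark_sum:
  fixes psi :: "'b \<Rightarrow> 'k measure"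
  assumes psi: "is_psi M X psi" and g: "g \<in> borel_measurable borel"
    and E: "E \<in> sets (inv_sigma M X)" and B: "B \<in> sets borel"
    and pos: "0 < emeasure lborel B" and fin: "emeasure lborel B < \<infinity>"
  shows "(\<integral>\<^sup>+\<omega>. indicator E \<omega> * mark_sum g (X \<omega>) B \<partial>M)
       = emeasure lborel B * (\<integral>\<^sup>+\<omega>. indicator E \<omega> * (\<integral>\<^sup>+ k. g k \<partial>psi \<omega>) \<partial>M)"
proof -
  let ?v = "emeasure lborel B"
  define f where "f \<omega> = mark_sum g (X \<omega>) B / ?v" for \<omega>
  have [measurable]: "(\<lambda>\<omega>. mark_sum g (X \<omega>) B) \<in> borel_measurable M"
    using measurable_compose[OF measurable_X measurable_mark_sum[OF g B]] .
  then have f [measurable]: "f \<in> borel_measurable M"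
    unfolding f_def by measurable
  have E_M [measurable]: "E \<in> sets M"
    using E by (rule sets_inv_sigma_subset)
  have "AE \<omega> in M. nn_cond_exp M (inv_sigma M X) f \<omega> = (\<integral>\<^sup>+ k. g k \<partial>psi \<omega>)"
    using psi g B pos fin unfolding is_psi_def f_def mark_sum_def by blast
  then have "(\<integral>\<^sup>+\<omega>. indicator E \<omega> * nn_cond_exp M (inv_sigma M X) f \<omega> \<partial>M)
      = (\<integral>\<^sup>+\<omega>. indicator E \<omega> * (\<integral>\<^sup>+ k. g k \<partial>psi \<omega>) \<partial>M)"
    by (auto intro!: nn_integral_cong_AE)
  then have "(\<integral>\<^sup>+\<omega>. indicator E \<omega> * f \<omega> \<partial>M) = (\<integral>\<^sup>+\<omega>. indicator E \<omega> * (\<integral>\<^sup>+ k. g k \<partial>psi \<omega>) \<partial>M)"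
    using inv.nn_cond_exp_intg[of "indicator E" f] E by simp
  moreover have "f \<omega> * ?v = mark_sum g (X \<omega>) B" for \<omega>
    unfolding f_def ennreal_divide_times using pos fin by simp
  then have "(\<integral>\<^sup>+\<omega>. indicator E \<omega> * mark_sum g (X \<omega>) B \<partial>M) = (\<integral>\<^sup>+\<omega>. ?v * (indicator E \<omega> * f \<omega>) \<partial>M)"
    by (metis mult.assoc mult.commute)
  moreover have "(\<integral>\<^sup>+\<omega>. ?v * (indicator E \<omega> * f \<omega>) \<partial>M) = ?v * (\<integral>\<^sup>+\<omega>. indicator E \<omega> * f \<omega> \<partial>M)"
    by (rule nn_integral_cmult) measurable
  ultimately show ?thesis
    by simp
qed

lemma nn_integral_inv_sum_shift_indicator:
  assumes E: "E \<in> sets (inv_sigma M X)" and S [measurable]: "S \<in> sets mpp_space" and "finite Z"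
  shows "(\<integral>\<^sup>+\<omega>. indicator E \<omega> * (\<Sum>z\<in>Z. indicator {\<omega> \<in> space M. shift (f z) (X \<omega>) \<in> S} \<omega>) \<partial>M)
    = of_nat (card Z) * emeasure M (E \<inter> {\<omega> \<in> space M. X \<omega> \<in> S})"
proof -
  have [measurable]: "E \<in> sets M"
    using E by (rule sets_inv_sigma_subset)
  have "(\<integral>\<^sup>+\<omega>. indicator E \<omega> * (\<Sum>z\<in>Z. indicator {\<omega> \<in> space M. shift (f z) (X \<omega>) \<in> S} \<omega>) \<partial>M)
      = (\<integral>\<^sup>+\<omega>. (\<Sum>z\<in>Z. indicator (E \<inter> {\<omega> \<in> space M. shift (f z) (X \<omega>) \<in> S}) \<omega>) \<partial>M)"
    by (simp add: sum_distrib_left indicator_inter_arith mult_ac)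
  also have "\<dots> = (\<Sum>z\<in>Z. emeasure M (E \<inter> {\<omega> \<in> space M. shift (f z) (X \<omega>) \<in> S}))"
    by (simp add: nn_integral_sum)
  also have "\<dots> = of_nat (card Z) * emeasure M (E \<inter> {\<omega> \<in> space M. X \<omega> \<in> S})"
    using emeasure_inv_Int_shift_X[OF E S] by simp
  finally show ?thesis .
qed

text \<open>Averaging the covering bound over the (2N+1)^d shifts of X by lattice points, the
  stationarity of X on invariant events turns it into a bound for X itself.\<close>
lemma averaged_lattice_maximal_inequality:
  fixes g :: "'k \<Rightarrow> ennreal"
  assumes g: "g \<in> borel_measurable borel" and t: "t > 0" and E: "E \<in> sets (inv_sigma M X)"
  shows "of_nat ((2 * N + 1) ^ DIM('a))
      * (ennreal t * emeasure M (E \<inter> {\<omega> \<in> space M. X \<omega> \<in> maximal_exceeds g t N}))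
    \<le> 11 ^ DIM('a) * (\<integral>\<^sup>+\<omega>. indicator E \<omega>
      * mark_sum g (X \<omega>) (cbox (- (2 * real N) *\<^sub>R One) ((2 * real N) *\<^sub>R One)) \<partial>M)"
proof -
  let ?Q = "cbox (- (2 * real N) *\<^sub>R One) ((2 * real N) *\<^sub>R One) :: 'a set"
  let ?shifted = "\<lambda>z \<omega>. indicator {\<omega> \<in> space M. shift (lattice_point z) (X \<omega>) \<in> maximal_exceeds g t N} \<omega>"
  have [measurable]: "maximal_exceeds g t N \<in> sets mpp_space" "E \<in> sets M"
    using sets_maximal_exceeds[OF g] sets_inv_sigma_subset[OF E] by auto
  have [measurable]: "(\<lambda>\<omega>. mark_sum g (X \<omega>) ?Q) \<in> borel_measurable M"
    using measurable_compose[OF measurable_X measurable_mark_sum[OF g]] by simp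
  have "of_nat ((2 * N + 1) ^ DIM('a))
        * (ennreal t * emeasure M (E \<inter> {\<omega> \<in> space M. X \<omega> \<in> maximal_exceeds g t N}))
      = ennreal t * (\<integral>\<^sup>+\<omega>. indicator E \<omega> * (\<Sum>z\<in>lattice_cube N. ?shifted z \<omega>) \<partial>M)"
    by (simp add: nn_integral_inv_sum_shift_indicator[OF E] finite_lattice_cube card_lattice_cube mult_ac)
  also have "\<dots> = (\<integral>\<^sup>+\<omega>. indicator E \<omega> * (ennreal t * (\<Sum>z\<in>lattice_cube N. ?shifted z \<omega>)) \<partial>M)"
    by (subst nn_integral_cmult[symmetric]) (auto simp: mult_ac)
  also have "\<dots> \<le> (\<integral>\<^sup>+\<omega>. indicator E \<omega> * (11 ^ DIM('a) * mark_sum g (X \<omega>) ?Q) \<partial>M)"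
  proof (intro nn_integral_mono mult_left_mono)
    fix \<omega> assume \<omega>: "\<omega> \<in> space M"
    then have count: "(\<Sum>z\<in>lattice_cube N. ?shifted z \<omega>)
        = of_nat (card {z \<in> lattice_cube N. shift (lattice_point z) (X \<omega>) \<in> maximal_exceeds g t N})"
      by (simp add: indicator_def finite_lattice_cube Int_def)
    show "ennreal t * (\<Sum>z\<in>lattice_cube N. ?shifted z \<omega>) \<le> 11 ^ DIM('a) * mark_sum g (X \<omega>) ?Q"
      unfolding count by (rule card_shift_maximal_exceeds_le[OF admissible_X[OF \<omega>] t])
  qed simp
  also have "\<dots> = 11 ^ DIM('a) * (\<integral>\<^sup>+\<omega>. indicator E \<omega> * mark_sum g (X \<omega>) ?Q \<partial>M)"
    by (subst nn_integral_cmult[symmetric]) (measurable, simp add: mult_ac)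
  finally show ?thesis .
qed

lemma maximal_inequality:
  fixes psi :: "'b \<Rightarrow> 'k measure" and g :: "'k \<Rightarrow> ennreal"
  assumes psi: "is_psi M X psi" and g: "g \<in> borel_measurable borel" and t: "t > 0"
    and E: "E \<in> sets (inv_sigma M X)"
  shows "ennreal t * emeasure M (E \<inter> {\<omega> \<in> space M. X \<omega> \<in> maximal_exceeds g t N})
    \<le> 22 ^ DIM('a) * (\<integral>\<^sup>+\<omega>. indicator E \<omega> * (\<integral>\<^sup>+ k. g k \<partial>psi \<omega>) \<partial>M)"
proof (cases "N = 0")
  case True
  then show ?thesis by (simp add: maximal_exceeds_def)
next
  case False
  let ?d = "DIM('a)"
  let ?Q = "cbox (- (2 * real N) *\<^sub>R One) ((2 * real N) *\<^sub>R One) :: 'a set"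
  let ?c = "\<integral>\<^sup>+\<omega>. indicator E \<omega> * (\<integral>\<^sup>+ k. g k \<partial>psi \<omega>) \<partial>M"
  let ?n = "of_nat ((2 * N + 1) ^ ?d) :: ennreal"
  have vol: "emeasure lborel ?Q = ennreal ((4 * real N) ^ ?d)"
    using emeasure_lborel_centered_cbox[of "2 * real N", where 'a = 'a] by simp
  have "?n * (ennreal t * emeasure M (E \<inter> {\<omega> \<in> space M. X \<omega> \<in> maximal_exceeds g t N}))
      \<le> 11 ^ ?d * (\<integral>\<^sup>+\<omega>. indicator E \<omega> * mark_sum g (X \<omega>) ?Q \<partial>M)"
    by (rule averaged_lattice_maximal_inequality[OF g t E])
  also have "\<dots> = 11 ^ ?d * (ennreal ((4 * real N) ^ ?d) * ?c)"
    using vol nn_integral_inv_mark_sum[OF psi g E, of ?Q] False by simp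
  also have "\<dots> \<le> 11 ^ ?d * ((2 ^ ?d * ?n) * ?c)"
    by (intro mult_left_mono mult_right_mono ennreal_four_mult_power_le) auto
  also have "\<dots> = ?n * ((11 ^ ?d * 2 ^ ?d) * ?c)"
    by (simp only: mult_ac)
  also have "(11 ^ ?d * 2 ^ ?d :: ennreal) = 22 ^ ?d"
    by (simp flip: power_mult_distrib)
  finally have "?n * (ennreal t * emeasure M (E \<inter> {\<omega> \<in> space M. X \<omega> \<in> maximal_exceeds g t N}))
      \<le> ?n * (22 ^ ?d * ?c)" .
  moreover have "?n \<noteq> 0" and "?n \<noteq> \<top>"
    by (simp, rule ennreal_of_nat_neq_top)
  ultimately show ?thesis
    using ennreal_mult_le_mult_iff by blast
qed

text \<open>The definition of psi does not make \<omega> \<mapsto> \<integral> g d(psi \<omega>) measurable; the conditional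
  expectation it is compared with provides an I_X-measurable version.\<close>
lemma psi_integral_inv_version:
  fixes psi :: "'b \<Rightarrow> 'k measure"
  assumes psi: "is_psi M X psi" and g: "g \<in> borel_measurable borel"
  obtains C where "C \<in> borel_measurable (inv_sigma M X)" "AE \<omega> in M. C \<omega> = (\<integral>\<^sup>+ k. g k \<partial>psi \<omega>)"
proof
  let ?B = "cbox 0 One :: 'a set"
  have vol: "emeasure lborel ?B = 1"
    by (simp add: emeasure_lborel_cbox_eq inner_Basis)
  have "AE \<omega> in M. nn_cond_exp M (inv_sigma M X) (\<lambda>\<omega>. mark_sum g (X \<omega>) A / emeasure lborel A) \<omega>
      = (\<integral>\<^sup>+ k. g k \<partial>psi \<omega>)"
    if "A \<in> sets borel" "0 < emeasure lborel A" "emeasure lborel A < \<infinity>" for A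
    using psi g that unfolding is_psi_def mark_sum_def by blast
  from this[of ?B] vol
  show "AE \<omega> in M. nn_cond_exp M (inv_sigma M X) (\<lambda>\<omega>. mark_sum g (X \<omega>) ?B / emeasure lborel ?B) \<omega>
      = (\<integral>\<^sup>+ k. g k \<partial>psi \<omega>)"
    by simp
qed simp

lemma psi_integral_inv_versions:
  fixes psi :: "'b \<Rightarrow> 'k measure" and g :: "nat \<Rightarrow> 'k \<Rightarrow> ennreal"
  assumes psi: "is_psi M X psi" and g: "\<And>m. g m \<in> borel_measurable borel"
  obtains C where "\<And>m. C m \<in> borel_measurable (inv_sigma M X)"
    "AE \<omega> in M. \<forall>m. C m \<omega> = (\<integral>\<^sup>+ k. g m k \<partial>psi \<omega>)"
proof -
  have "\<exists>C. C \<in> borel_measurable (inv_sigma M X) \<and> (AE \<omega> in M. C \<omega> = (\<integral>\<^sup>+ k. g m k \<partial>psi \<omega>))" for m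
    by (rule psi_integral_inv_version[OF psi g]) blast
  then obtain C where "\<And>m. C m \<in> borel_measurable (inv_sigma M X)"
    and "\<And>m. AE \<omega> in M. C m \<omega> = (\<integral>\<^sup>+ k. g m k \<partial>psi \<omega>)"
    by metis
  then show ?thesis
    by (intro that) (auto simp: AE_all_countable)
qed

lemma null_sets_inv_Int_maximal_exceeds:
  fixes psi :: "'b \<Rightarrow> 'k measure" and g :: "nat \<Rightarrow> 'k \<Rightarrow> ennreal"
  assumes psi: "is_psi M X psi" and g: "\<And>m. g m \<in> borel_measurable borel" and t: "t > 0"
    and E: "E \<in> sets (inv_sigma M X)"
    and lim: "(\<lambda>m. \<integral>\<^sup>+\<omega>. indicator E \<omega> * (\<integral>\<^sup>+ k. g m k \<partial>psi \<omega>) \<partial>M) \<longlonglongrightarrow> 0"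
  shows "E \<inter> (\<Inter>m. {\<omega> \<in> space M. \<exists>N. X \<omega> \<in> maximal_exceeds (g m) t N}) \<in> null_sets M"
    (is "?Z \<in> _")
proof -
  let ?bad = "\<lambda>m N. E \<inter> {\<omega> \<in> space M. X \<omega> \<in> maximal_exceeds (g m) t N}"
  let ?c = "\<lambda>m. \<integral>\<^sup>+\<omega>. indicator E \<omega> * (\<integral>\<^sup>+ k. g m k \<partial>psi \<omega>) \<partial>M"
  have [measurable]: "E \<in> sets M" "maximal_exceeds (g m) t N \<in> sets mpp_space" for m N
    using sets_inv_sigma_subset[OF E] sets_maximal_exceeds[OF g] by auto
  have "ennreal t * emeasure M ?Z \<le> 22 ^ DIM('a) * ?c m" for m
  proof -
    have "incseq (?bad m)"
      using maximal_exceeds_mono by (force simp: incseq_def)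
    then have "emeasure M (\<Union>N. ?bad m N) = (SUP N. emeasure M (?bad m N))"
      by (intro SUP_emeasure_incseq[symmetric]) auto
    then have "ennreal t * emeasure M (\<Union>N. ?bad m N) \<le> 22 ^ DIM('a) * ?c m"
      using maximal_inequality[OF psi g t E] by (simp add: SUP_mult_left_ennreal SUP_least)
    moreover have "emeasure M ?Z \<le> emeasure M (\<Union>N. ?bad m N)"
      by (intro emeasure_mono) auto
    ultimately show ?thesis
      by (meson dual_order.trans mult_left_mono zero_le)
  qed
  moreover have "(\<lambda>m. 22 ^ DIM('a) * ?c m) \<longlonglongrightarrow> 22 ^ DIM('a) * 0"
    by (rule ennreal_tendsto_cmult[OF _ lim]) (simp add: power_less_top_ennreal)
  ultimately have "ennreal t * emeasure M ?Z \<le> 0"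
    by (intro LIMSEQ_le_const) auto
  with t show ?thesis
    by (auto simp: null_sets_def)
qed

lemma AE_tendsto_psi_integral_excess:
  fixes psi :: "'b \<Rightarrow> 'k measure" and h :: "'k \<Rightarrow> real"
  assumes psi: "is_psi M X psi" and h: "h \<in> borel_measurable borel"
    and fin: "AE \<omega> in M. (\<integral>\<^sup>+ k. ennreal (h k) \<partial>psi \<omega>) < \<infinity>"
  shows "AE \<omega> in M. (\<lambda>m. \<integral>\<^sup>+ k. ennreal (h k - real m) \<partial>psi \<omega>) \<longlonglongrightarrow> 0"
  using fin AE_space
proof eventually_elim
  case (elim \<omega>)
  then have "sets (psi \<omega>) = sets borel"
    using psi unfolding is_psi_def by blast
  then show ?case
    using tendsto_nn_integral_excess[OF _ h elim(1)] by blast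
qed

lemma tendsto_inv_integral_excess:
  fixes psi :: "'b \<Rightarrow> 'k measure" and h :: "'k \<Rightarrow> real"
  assumes psi: "is_psi M X psi" and h: "h \<in> borel_measurable borel"
    and fin: "AE \<omega> in M. (\<integral>\<^sup>+ k. ennreal (h k) \<partial>psi \<omega>) < \<infinity>" and E [measurable]: "E \<in> sets M"
    and bound: "AE \<omega> in M. \<omega> \<in> E \<longrightarrow> (\<integral>\<^sup>+ k. ennreal (h k) \<partial>psi \<omega>) \<le> of_nat K"
  shows "(\<lambda>m. \<integral>\<^sup>+\<omega>. indicator E \<omega> * (\<integral>\<^sup>+ k. ennreal (h k - real m) \<partial>psi \<omega>) \<partial>M) \<longlonglongrightarrow> 0"
proof -
  have "(\<lambda>k. ennreal (h k - real m)) \<in> borel_measurable borel" for m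
    using h by measurable
  then obtain C where C: "\<And>m. C m \<in> borel_measurable (inv_sigma M X)"
    and C_all: "AE \<omega> in M. \<forall>m. C m \<omega> = (\<integral>\<^sup>+ k. ennreal (h k - real m) \<partial>psi \<omega>)"
    by (rule psi_integral_inv_versions[OF psi, where g = "\<lambda>m k. ennreal (h k - real m)"]) blast
  have [measurable]: "C m \<in> borel_measurable M" for m
    using measurable_from_subalg[OF subalgebra_inv_sigma C] .
  have "(\<lambda>m. \<integral>\<^sup>+\<omega>. indicator E \<omega> * C m \<omega> \<partial>M) \<longlonglongrightarrow> 0"
  proof (rule tendsto_nn_integral_decreasing_0)
    show "AE \<omega> in M. indicator E \<omega> * C (Suc m) \<omega> \<le> indicator E \<omega> * C m \<omega>" for m
      using C_all by eventually_elim (auto intro!: mult_left_mono nn_integral_mono ennreal_leI)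
    have "AE \<omega> in M. indicator E \<omega> * C 0 \<omega> \<le> of_nat K"
      using C_all bound by eventually_elim (auto simp: indicator_def)
    then have "(\<integral>\<^sup>+\<omega>. indicator E \<omega> * C 0 \<omega> \<partial>M) \<le> (\<integral>\<^sup>+\<omega>. of_nat K \<partial>M)"
      by (rule nn_integral_mono_AE)
    also have "\<dots> < \<infinity>"
      by (simp add: emeasure_space_1 of_nat_less_top)
    finally show "(\<integral>\<^sup>+\<omega>. indicator E \<omega> * C 0 \<omega> \<partial>M) < \<infinity>" .
    show "AE \<omega> in M. (\<lambda>m. indicator E \<omega> * C m \<omega>) \<longlonglongrightarrow> 0"
      using C_all AE_tendsto_psi_integral_excess[OF psi h fin]
      by eventually_elim (simp add: indicator_def)
  qed measurable
  moreover have "(\<integral>\<^sup>+\<omega>. indicator E \<omega> * C m \<omega> \<partial>M)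
      = (\<integral>\<^sup>+\<omega>. indicator E \<omega> * (\<integral>\<^sup>+ k. ennreal (h k - real m) \<partial>psi \<omega>) \<partial>M)" for m
    using C_all by (intro nn_integral_cong_AE) auto
  ultimately show ?thesis
    by simp
qed

lemma AE_mark_sum_excess_le:
  fixes psi :: "'b \<Rightarrow> 'k measure" and h :: "'k \<Rightarrow> real"
  assumes psi: "is_psi M X psi" and h: "h \<in> borel_measurable borel"
    and fin: "AE \<omega> in M. (\<integral>\<^sup>+ k. ennreal (h k) \<partial>psi \<omega>) < \<infinity>" and t: "t > 0"
  shows "AE \<omega> in M. \<exists>m::nat. \<forall>r\<ge>1.
    mark_sum (\<lambda>k. ennreal (h k - real m)) (X \<omega>) (ball 0 (real r)) \<le> t * real r ^ DIM('a)"
proof -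
  have "(\<lambda>k. ennreal (h k)) \<in> borel_measurable borel"
    using h by measurable
  then obtain C where C: "C \<in> borel_measurable (inv_sigma M X)"
    and C_eq: "AE \<omega> in M. C \<omega> = (\<integral>\<^sup>+ k. ennreal (h k) \<partial>psi \<omega>)"
    by (rule psi_integral_inv_version[OF psi])
  define E where "E K = {\<omega> \<in> space M. C \<omega> \<le> of_nat K}" for K :: nat
  define bad where
    "bad = (\<Inter>m::nat. {\<omega> \<in> space M. \<exists>N. X \<omega> \<in> maximal_exceeds (\<lambda>k. ennreal (h k - real m)) t N})"
  have E: "E K \<in> sets (inv_sigma M X)" for K
    using C unfolding E_def space_inv_sigma[symmetric] by measurable
  have "E K \<inter> bad \<in> null_sets M" for K
    unfolding bad_def
  proof (rule null_sets_inv_Int_maximal_exceeds[OF psi _ t E])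
    show "(\<lambda>k. ennreal (h k - real m)) \<in> borel_measurable borel" for m
      using h by measurable
    have "AE \<omega> in M. \<omega> \<in> E K \<longrightarrow> (\<integral>\<^sup>+ k. ennreal (h k) \<partial>psi \<omega>) \<le> of_nat K"
      using C_eq by eventually_elim (auto simp: E_def)
    then show "(\<lambda>m. \<integral>\<^sup>+\<omega>. indicator (E K) \<omega> * (\<integral>\<^sup>+ k. ennreal (h k - real m) \<partial>psi \<omega>) \<partial>M) \<longlonglongrightarrow> 0"
      using sets_inv_sigma_subset[OF E] by (intro tendsto_inv_integral_excess[OF psi h fin])
  qed
  then have "AE \<omega> in M. \<omega> \<notin> (\<Union>K. E K \<inter> bad)"
    by (intro AE_not_in null_sets_UN)
  then show ?thesis
    using C_eq fin AE_space
  proof eventually_elim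
    case (elim \<omega>)
    then have "C \<omega> < \<infinity>"
      by simp
    then obtain K where "C \<omega> < of_nat K"
      using ennreal_Ex_less_of_nat unfolding infinity_ennreal_def by blast
    then have "\<omega> \<notin> bad"
      using elim(1,4) less_imp_le unfolding E_def by blast
    then obtain m where "\<forall>N. X \<omega> \<notin> maximal_exceeds (\<lambda>k. ennreal (h k - real m)) t N"
      unfolding bad_def using elim(4) by blast
    then show ?case
      using not_in_maximal_exceeds_iff[OF admissible_X[OF elim(4)]] by blast
  qed
qed

end

theorem lemma6p2:
  fixes M :: "'b measure"
    and X :: "'b \<Rightarrow> ('a::euclidean_space \<times> 'k::polish_space) set"
    and psi :: "'b \<Rightarrow> 'k measure"
    and A :: "'a set"
    and h :: "'k \<Rightarrow> real"
    and I :: "real \<Rightarrow> 'b \<Rightarrow> 'a set"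
  assumes "prob_space M"
    and "stationary_mpp M X"
    and "\<And>B. B \<in> sets borel \<Longrightarrow> bounded B \<Longrightarrow> (\<integral>\<^sup>+ \<omega>. npts (X \<omega>) B \<partial>M) < \<infinity>"
    and "is_psi M X psi"
    and "A \<in> sets borel" and "bounded A"
    and "h \<in> borel_measurable borel" and "\<And>k. h k \<ge> 0"
    and "AE \<omega> in M. (\<integral>\<^sup>+ k. ennreal (h k) \<partial>psi \<omega>) < \<infinity>"
    and "\<And>\<epsilon> \<omega>. \<epsilon> > 0 \<Longrightarrow> \<omega> \<in> space M \<Longrightarrow>
           I \<epsilon> \<omega> \<subseteq> fst ` X \<omega> \<inter> (\<lambda>a. inverse \<epsilon> *\<^sub>R a) ` A"
    and "AE \<omega> in M. ((\<lambda>\<epsilon>. \<epsilon> ^ DIM('a) * real (card (I \<epsilon> \<omega>))) \<longlongrightarrow> 0) (at_right 0)"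
  shows "AE \<omega> in M. ((\<lambda>\<epsilon>. \<epsilon> ^ DIM('a) * (\<Sum>z\<in>I \<epsilon> \<omega>. h (mark (X \<omega>) z))) \<longlongrightarrow> 0) (at_right 0)"
proof -
  interpret stationary_marked_process M X
    using assms(1,2) by (simp add: stationary_marked_process_def stationary_marked_process_axioms_def)
  have "AE \<omega> in M. \<forall>n::nat. \<exists>m::nat. \<forall>r\<ge>1.
      mark_sum (\<lambda>k. ennreal (h k - real m)) (X \<omega>) (ball 0 (real r)) \<le> inverse (Suc n) * real r ^ DIM('a)"
    unfolding AE_all_countable by (intro allI AE_mark_sum_excess_le[OF assms(4,7,9)]) simp
  with assms(11) AE_space show ?thesis
  proof eventually_elim
    case (elim \<omega>)
    show ?case
      using elim(3) assms(10)[OF _ elim(2)]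
      by (intro tendsto_scaled_sum_mark[OF admissible_X[OF elim(2)] assms(8,6) _ elim(1)]) blast+
  qed
qed

end
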